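(* Let $\Gamma\subset\mathbf{Z}^n$ be an almost periodic pattern. Then the function $\rho_\Gamma:\mathbf{Z}^n\to\mathbf{R}$ is Bohr almost periodic, i.e. for every $\varepsilon>0$ the set $\{v\in\mathbf{Z}^n : \sup_{u\in\mathbf{Z}^n}|\rho_\Gamma(u)-\rho_\Gamma(u+v)|<\varepsilon\}$ is relatively dense.
   Context: Balls are for the sup norm: $B(x,R)=\{y:\max_i|x_i-y_i|<R\}$, $B_R=B(0,R)$, $[B]=B\cap\mathbf{Z}^n$. Relatively dense: there is $R_0>0$ such that every ball of radius at least $R_0$ meets the set; uniformly discrete: there is $r>0$ such that every ball of radius at most $r$ contains at most one point; Delone: both. $D_R^+(\Gamma)=\sup_{x\in\mathbf{R}^n}\frac{\operatorname{Card}(B(x,R)\cap\Gamma)}{\operatorname{Card}(B(x,R)\cap\mathbf{Z}^n)}$. A Delone set $\Gamma\subset\mathbf{Z}^n$ is an almost periodic pattern if for every $\varepsilon>0$ there exist $R_\varepsilon>0$ and a relatively dense set $\mathcal N_\varepsilon$ with $D_R^+((\Gamma+v)\Delta\Gamma)<\varepsilon$ for all $R\ge R_\varepsilon$, $v\in\mathcal N_\varepsilon$. The density of a set $A\subset\mathbf{Z}^n$ is $D(A)=\lim_{R\to\infty}\operatorname{Card}(A\cap[B_R])/\operatorname{Card}[B_R]$ (the paper uses that these densities exist for the sets considered). For $v\in\mathbf{Z}^n$, $\rho_\Gamma(v)=\frac{D(\Gamma\cap(\Gamma-v))}{D(\Gamma)}\in[0,1]$. *)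

theory Defs
  imports "HOL-Analysis.Analysis"
begin

text \<open>Z^n is modelled as int^'n, R^n as real^'n, for an arbitrary finite index type 'n.\<close>

definition lat_emb :: "int^'n \<Rightarrow> real^'n" where
  "lat_emb v = (\<chi> i. real_of_int (v $ i))"

definition sball :: "real^'n \<Rightarrow> real \<Rightarrow> (real^'n) set" where
  "sball x R = {y. Max (range (\<lambda>i. \<bar>x $ i - y $ i\<bar>)) < R}"

definition lat_ball :: "real^'n \<Rightarrow> real \<Rightarrow> (int^'n) set" where
  "lat_ball x R = {v. lat_emb v \<in> sball x R}"

definition rel_dense :: "(int^'n) set \<Rightarrow> bool" where
  "rel_dense A \<longleftrightarrow> (\<exists>R0>0. \<forall>(x::real^'n) R. R \<ge> R0 \<longrightarrow> lat_ball x R \<inter> A \<noteq> {})"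

definition unif_discrete :: "(int^'n) set \<Rightarrow> bool" where
  "unif_discrete A \<longleftrightarrow> (\<exists>r>0. \<forall>(x::real^'n) R. R \<le> r \<longrightarrow> card (lat_ball x R \<inter> A) \<le> 1)"

definition delone :: "(int^'n) set \<Rightarrow> bool" where
  "delone A \<longleftrightarrow> rel_dense A \<and> unif_discrete A"

definition upper_density :: "real \<Rightarrow> (int^'n) set \<Rightarrow> real" where
  "upper_density R A =
     (SUP x::real^'n. real (card (lat_ball x R \<inter> A)) / real (card (lat_ball x R)))"

definition translate :: "(int^'n) set \<Rightarrow> int^'n \<Rightarrow> (int^'n) set" where
  "translate A v = (\<lambda>x. x + v) ` A"

definition almost_periodic_pattern :: "(int^'n) set \<Rightarrow> bool" where
  "almost_periodic_pattern \<Gamma> \<longleftrightarrow> delone \<Gamma> \<and>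
     (\<forall>\<epsilon>>0. \<exists>R\<epsilon>>0. \<exists>N. rel_dense N \<and>
        (\<forall>R\<ge>R\<epsilon>. \<forall>v\<in>N.
           upper_density R ((translate \<Gamma> v - \<Gamma>) \<union> (\<Gamma> - translate \<Gamma> v)) < \<epsilon>))"

definition density :: "(int^'n) set \<Rightarrow> real" where
  "density A = Lim at_top (\<lambda>R::real.
      real (card (A \<inter> lat_ball 0 R)) / real (card (lat_ball (0::real^'n) R)))"

definition rho :: "(int^'n) set \<Rightarrow> int^'n \<Rightarrow> real" where
  "rho \<Gamma> v = density (\<Gamma> \<inter> translate \<Gamma> (- v)) / density \<Gamma>"

end

(*
  If v is an almost period of \<Gamma>, the sets \<Gamma> \<inter> (\<Gamma> - u) and \<Gamma> \<inter> (\<Gamma> - (u + v)) differ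
  only inside the translate by -(u + v) of (\<Gamma> + v) \<Delta> \<Gamma>, whose upper density is small.
  Hence |\<rho>(u) - \<rho>(u + v)| is small uniformly in u, and such v form a relatively dense set.

  The substance lies in the existence of the densities and in D(\<Gamma>) > 0. Almost periodicity,
  measured by counting points in cubes, passes from \<Gamma> to \<Gamma> \<inter> (\<Gamma> + w). For such a set
  all cubes of a fixed large radius contain nearly the same number of points, because each
  is squeezed between two cubes around a nearby almost period. A large cube centred at 0 is
  tiled by translates of a fixed cube, so its density ratio stays close to that of the
  fixed cube, and the ratios form a Cauchy sequence.
*)

theory Submission
  imports Defs "HOL-Real_Asymp.Real_Asymp"
begin

lemma card_Int_le_card_Int_add_diff:
  assumes "finite Q'" "Q \<subseteq> Q'"
  shows "real (card (A \<inter> Q')) \<le> real (card (A \<inter> Q)) + real (card Q') - real (card Q)"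
proof -
  have "finite Q"
    using assms finite_subset by blast
  have "card (A \<inter> Q') \<le> card ((A \<inter> Q) \<union> (Q' - Q))"
    using assms \<open>finite Q\<close> by (intro card_mono) auto
  also have "\<dots> \<le> card (A \<inter> Q) + card (Q' - Q)"
    by (rule card_Un_le)
  also have "card (Q' - Q) = card Q' - card Q"
    using assms by (simp add: card_Diff_subset finite_subset)
  finally show ?thesis
    using card_mono[OF assms] by linarith
qed

lemma card_Int_diff_le_card_sym_diff:
  assumes "finite Q"
  shows "\<bar>real (card (A \<inter> Q)) - real (card (B \<inter> Q))\<bar> \<le> real (card (Q \<inter> sym_diff A B))"
proof -
  have "card (X \<inter> Q) \<le> card (Y \<inter> Q) + card (Q \<inter> sym_diff A B)"
    if "sym_diff X Y = sym_diff A B" for X Y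
  proof -
    have "card (X \<inter> Q) \<le> card ((Y \<inter> Q) \<union> (Q \<inter> sym_diff A B))"
      using assms that by (intro card_mono) auto
    then show ?thesis
      using card_Un_le order_trans by blast
  qed
  from this[of A B] this[of B A] show ?thesis
    by (simp add: Un_commute)
qed

lemma abs_divide_diff_le:
  fixes x y a a' :: real
  assumes "0 \<le> x" "x \<le> a" "0 < a" "a \<le> a'" "x \<le> y" "y \<le> x + (a' - a)"
  shows "\<bar>y / a' - x / a\<bar> \<le> (a' - a) / a'"
proof -
  have "x * (a' - a) \<le> a * (a' - a)" "y * a \<le> (x + (a' - a)) * a" "x * a \<le> y * a"
    "x * a \<le> x * a'"
    using assms by (simp_all add: mult_right_mono mult_left_mono)
  then have "\<bar>y * a - x * a'\<bar> \<le> (a' - a) * a"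
    unfolding abs_le_iff by (simp add: algebra_simps)
  moreover have "y / a' - x / a = (y * a - x * a') / (a' * a)"
    using assms by (simp add: field_simps)
  moreover have "\<bar>y * a - x * a'\<bar> / (a' * a) \<le> (a' - a) * a / (a' * a)"
    using \<open>\<bar>y * a - x * a'\<bar> \<le> (a' - a) * a\<close> assms by (intro divide_right_mono) auto
  ultimately show ?thesis
    using assms by (simp add: abs_divide)
qed

lemma abs_le_odd_mult_div:
  fixes x :: int and m k :: nat
  defines "s \<equiv> 2 * int m + 1"
  assumes x: "\<bar>x\<bar> \<le> int m + int k * s"
  shows "\<bar>(x + int m) div s\<bar> \<le> int k" "\<bar>x - s * ((x + int m) div s)\<bar> \<le> int m"
proof -
  define q where "q = (x + int m) div s"
  define r where "r = (x + int m) mod s"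
  have s: "s > 0" unfolding s_def by simp
  have qr: "x + int m = s * q + r" "0 \<le> r" "r < s"
    using s unfolding q_def r_def by simp_all
  then show "\<bar>x - s * q\<bar> \<le> int m"
    unfolding s_def by simp
  have "s * q < s * (int k + 1)" "s * (- int k - 1) < s * q"
    using qr x unfolding s_def by (simp_all add: algebra_simps abs_le_iff)
  then show "\<bar>q\<bar> \<le> int k"
    using s by (simp add: mult_less_cancel_left_pos)
qed

lemma odd_mult_near_unique:
  fixes x q q' :: int and m :: nat
  assumes "\<bar>x - (2 * int m + 1) * q\<bar> \<le> int m" "\<bar>x - (2 * int m + 1) * q'\<bar> \<le> int m"
  shows "q = q'"
proof -
  have "\<bar>(2 * int m + 1) * (q - q')\<bar> \<le> 2 * int m"
    using assms by (simp add: algebra_simps abs_le_iff)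
  then have "(2 * int m + 1) * \<bar>q - q'\<bar> < (2 * int m + 1) * 1"
    by (simp add: abs_mult)
  then have "\<bar>q - q'\<bar> < 1"
    by (rule mult_left_less_imp_less) simp
  then show ?thesis by simp
qed

lemma abs_le_of_odd_mult_near:
  fixes y q :: int and m k :: nat
  assumes "\<bar>q\<bar> \<le> int k" "\<bar>y - (2 * int m + 1) * q\<bar> \<le> int m"
  shows "\<bar>y\<bar> \<le> int m + int k * (2 * int m + 1)"
proof -
  have "\<bar>(2 * int m + 1) * q\<bar> \<le> int k * (2 * int m + 1)"
    using assms(1) by (simp add: abs_mult mult.commute mult_right_mono)
  then show ?thesis
    using assms(2) by linarith
qed

section \<open>Lattice cubes\<close>

definition cube :: "int^'n \<Rightarrow> nat \<Rightarrow> (int^'n) set" where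
  "cube c m = {x. \<forall>i. \<bar>x$i - c$i\<bar> \<le> int m}"

lemma mem_cube_iff: "x \<in> cube c m \<longleftrightarrow> (\<forall>i. c$i - int m \<le> x$i \<and> x$i \<le> c$i + int m)"
  unfolding cube_def by (simp add: abs_le_iff algebra_simps conj_commute)

lemma mem_cube_commute: "x \<in> cube c m \<longleftrightarrow> c \<in> cube x m"
  by (simp add: cube_def abs_minus_commute)

lemma cube_eq_image_PiE:
  "cube c m = vec_lambda ` (PiE UNIV (\<lambda>i. {c$i - int m .. c$i + int m}))"
proof (intro set_eqI iffI)
  fix x assume "x \<in> cube c m"
  then have "(\<lambda>i. x$i) \<in> PiE UNIV (\<lambda>i. {c$i - int m .. c$i + int m})"
    by (simp add: mem_cube_iff PiE_def)
  then show "x \<in> vec_lambda ` (PiE UNIV (\<lambda>i. {c$i - int m .. c$i + int m}))"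
    by (rule rev_image_eqI) simp
qed (auto simp: mem_cube_iff PiE_def)

lemma finite_cube [simp]: "finite (cube c m)"
  unfolding cube_eq_image_PiE by (intro finite_imageI finite_PiE) auto

lemma card_cube [simp]: "card (cube (c::int^'n) m) = (2*m+1)^CARD('n)"
proof -
  have "card (cube c m) = card (PiE UNIV (\<lambda>i::'n. {c$i - int m .. c$i + int m}))"
    unfolding cube_eq_image_PiE by (rule card_image) (auto simp: inj_on_def vec_lambda_inject)
  also have "\<dots> = (\<Prod>i\<in>(UNIV::'n set). card {c$i - int m .. c$i + int m})"
    by (simp add: card_PiE)
  also have "\<dots> = (\<Prod>i\<in>(UNIV::'n set). 2*m+1)"
    by (intro prod.cong) (simp_all add: nat_add_distrib nat_mult_distrib)
  finally show ?thesis by simp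
qed

lemma cube_mono: "m \<le> m' \<Longrightarrow> cube c m \<subseteq> cube c m'"
  unfolding cube_def by (auto intro: order_trans)

lemma mem_cube_trans: "x \<in> cube c m \<Longrightarrow> c \<in> cube v L \<Longrightarrow> x \<in> cube v (m + L)"
proof -
  assume x: "x \<in> cube c m" and c: "c \<in> cube v L"
  have "\<bar>x$i - v$i\<bar> \<le> int m + int L" for i
  proof -
    have "\<bar>x$i - c$i\<bar> \<le> int m" "\<bar>c$i - v$i\<bar> \<le> int L"
      using x c by (simp_all add: cube_def)
    then show ?thesis by linarith
  qed
  then show ?thesis by (simp add: cube_def)
qed

lemma cube_subset_cube_add: "c \<in> cube v L \<Longrightarrow> cube c m \<subseteq> cube v (m + L)"
  using mem_cube_trans by blast

lemma cube_diff_subset_cube: "c \<in> cube v L \<Longrightarrow> L \<le> m \<Longrightarrow> cube v (m - L) \<subseteq> cube c m"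
  using mem_cube_trans[of _ v "m - L" c L] by (auto simp: mem_cube_commute[of c])

lemma translate_cube: "translate (cube c m) v = cube (c + v) m"
proof (intro set_eqI iffI)
  fix y assume "y \<in> cube (c + v) m"
  then have "y - v \<in> cube c m" by (simp add: cube_def algebra_simps)
  then show "y \<in> translate (cube c m) v"
    unfolding translate_def by (rule rev_image_eqI) simp
qed (auto simp: translate_def cube_def)

lemma card_cube_Int_translate: "card (cube c m \<inter> translate S v) = card (cube (c - v) m \<inter> S)"
proof -
  have "cube c m \<inter> translate S v = (\<lambda>x. x + v) ` (cube (c - v) m \<inter> S)"
    using translate_cube[of "c - v" m v] by (simp add: translate_def image_Int)
  then show ?thesis
    by (simp add: card_image)
qed

lemma mem_lat_ball_iff: "v \<in> lat_ball x R \<longleftrightarrow> (\<forall>i. \<bar>x$i - real_of_int (v$i)\<bar> < R)"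
proof -
  have "finite (range (\<lambda>i. \<bar>x $ i - lat_emb v $ i\<bar>))" "range (\<lambda>i. \<bar>x $ i - lat_emb v $ i\<bar>) \<noteq> {}"
    by simp_all
  then show ?thesis
    by (simp add: lat_ball_def sball_def lat_emb_def Max_less_iff)
qed

lemma lat_ball_lat_emb: "lat_ball (lat_emb c) (real m + 1) = cube c m"
proof -
  have "\<bar>real_of_int a - real_of_int b\<bar> < real m + 1 \<longleftrightarrow> \<bar>b - a\<bar> \<le> int m" for a b :: int
  proof -
    have "\<bar>real_of_int a - real_of_int b\<bar> = real_of_int \<bar>b - a\<bar>" by simp
    then show ?thesis by linarith
  qed
  then show ?thesis
    by (auto simp: mem_lat_ball_iff cube_def lat_emb_def)
qed

lemma lat_ball_0_eq_cube:
  assumes "R > 0"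
  shows "lat_ball 0 R = cube 0 (nat (\<lceil>R\<rceil> - 1))"
proof -
  have "\<bar>real_of_int a\<bar> < R \<longleftrightarrow> \<bar>a\<bar> \<le> int (nat (\<lceil>R\<rceil> - 1))" for a :: int
  proof -
    have "\<bar>real_of_int a\<bar> < R \<longleftrightarrow> \<bar>a\<bar> < \<lceil>R\<rceil>"
      by (metis ceiling_less_iff less_ceiling_iff of_int_abs)
    then show ?thesis using assms by linarith
  qed
  then show ?thesis
    by (intro set_eqI) (simp add: mem_lat_ball_iff cube_def)
qed

lemma rel_dense_mono: "rel_dense N \<Longrightarrow> N \<subseteq> S \<Longrightarrow> rel_dense S"
  unfolding rel_dense_def by blast

definition cube_dense :: "nat \<Rightarrow> (int^'n) set \<Rightarrow> bool" where
  "cube_dense L N \<longleftrightarrow> (\<forall>c. N \<inter> cube c L \<noteq> {})"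

lemma rel_dense_imp_cube_dense:
  assumes "rel_dense N"
  obtains L where "cube_dense L N"
proof -
  obtain R0 where R0: "R0 > 0" "\<forall>x R. R \<ge> R0 \<longrightarrow> lat_ball x R \<inter> N \<noteq> {}"
    using assms unfolding rel_dense_def by blast
  have "R0 \<le> real (nat \<lceil>R0\<rceil>) + 1"
    using le_of_int_ceiling[of R0] R0(1) by linarith
  then have "cube_dense (nat \<lceil>R0\<rceil>) N"
    using R0(2) unfolding cube_dense_def by (metis lat_ball_lat_emb Int_commute)
  then show thesis by (rule that)
qed

lemma card_Int_cube_le_upper_density:
  assumes "upper_density (real m + 1) S < e"
  shows "real (card (cube c m \<inter> S)) \<le> e * real (card (cube c m))"
proof -
  let ?f = "\<lambda>x. real (card (lat_ball x (real m + 1) \<inter> S)) / real (card (lat_ball x (real m + 1)))"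
  have "?f x \<le> 1" for x
    by (cases "finite (lat_ball x (real m + 1))") (auto simp: divide_le_eq_1 card_gt_0_iff intro: card_mono)
  then have "?f (lat_emb c) \<le> upper_density (real m + 1) S"
    unfolding upper_density_def by (intro cSUP_upper bdd_aboveI2) auto
  with assms have "real (card (cube c m \<inter> S)) / real (card (cube c m)) < e"
    by (simp add: lat_ball_lat_emb)
  then show ?thesis
    by (simp add: divide_less_eq less_imp_le)
qed

section \<open>Almost periods counted in cubes\<close>

(* cube c m is the lattice ball [B(c, m + 1)] (lat_ball_lat_emb), and
   sym_diff (translate A v) A is (A + v) \<Delta> A. *)
definition almost_period :: "(int^'n) set \<Rightarrow> real \<Rightarrow> nat \<Rightarrow> int^'n \<Rightarrow> bool" where
  "almost_period A e M v \<longleftrightarrow>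
     (\<forall>m\<ge>M. \<forall>c. real (card (cube c m \<inter> sym_diff (translate A v) A)) \<le> e * real (card (cube c m)))"

(* Unlike almost_periodic_pattern, this passes to \<Gamma> \<inter> translate \<Gamma> w, the set whose
   density is the numerator of rho. *)
definition cube_almost_periodic :: "(int^'n) set \<Rightarrow> bool" where
  "cube_almost_periodic A \<longleftrightarrow> (\<forall>e>0. \<exists>M L N. cube_dense L N \<and> (\<forall>v\<in>N. almost_period A e M v))"

lemma almost_periodic_pattern_almost_periods:
  assumes "almost_periodic_pattern \<Gamma>" "e > 0"
  obtains M N where "rel_dense N" "\<forall>v\<in>N. almost_period \<Gamma> e M v"
proof -
  obtain R N where RN: "rel_dense N"
    "\<forall>R'\<ge>R. \<forall>v\<in>N. upper_density R' (sym_diff (translate \<Gamma> v) \<Gamma>) < e"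
    using assms unfolding almost_periodic_pattern_def by blast
  have "almost_period \<Gamma> e (nat \<lceil>R\<rceil>) v" if "v \<in> N" for v
    unfolding almost_period_def
  proof (intro allI impI)
    fix m c assume "nat \<lceil>R\<rceil> \<le> m"
    then have "R \<le> real m + 1" by linarith
    then show "real (card (cube c m \<inter> sym_diff (translate \<Gamma> v) \<Gamma>)) \<le> e * real (card (cube c m))"
      using RN(2) \<open>v \<in> N\<close> by (blast intro: card_Int_cube_le_upper_density)
  qed
  with RN(1) show thesis by (blast intro: that)
qed

lemma mem_translate: "x \<in> translate S w \<longleftrightarrow> x - w \<in> S"
  unfolding translate_def by (auto intro: rev_image_eqI[of "x - w"])

lemma sym_diff_translate_Int_translate:
  "sym_diff (translate (A \<inter> translate A w) v) (A \<inter> translate A w)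
     \<subseteq> sym_diff (translate A v) A \<union> translate (sym_diff (translate A v) A) w"
  by (auto simp: mem_translate algebra_simps)

lemma almost_period_Int_translate:
  assumes "almost_period A e M v"
  shows "almost_period (A \<inter> translate A w) (2 * e) M v"
  unfolding almost_period_def
proof (intro allI impI)
  fix m c assume "M \<le> m"
  let ?D = "sym_diff (translate A v) A"
  have "card (cube c m \<inter> sym_diff (translate (A \<inter> translate A w) v) (A \<inter> translate A w))
      \<le> card ((cube c m \<inter> ?D) \<union> (cube c m \<inter> translate ?D w))"
    using sym_diff_translate_Int_translate[of A w v] by (intro card_mono) auto
  also have "\<dots> \<le> card (cube c m \<inter> ?D) + card (cube (c - w) m \<inter> ?D)"
    by (metis card_Un_le card_cube_Int_translate)
  moreover have "real (card (cube c m \<inter> ?D)) \<le> e * real (card (cube c m))"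
    and "real (card (cube (c - w) m \<inter> ?D)) \<le> e * real (card (cube c m))"
    using assms \<open>M \<le> m\<close> unfolding almost_period_def by (metis card_cube)+
  ultimately show "real (card (cube c m \<inter> sym_diff (translate (A \<inter> translate A w) v) (A \<inter> translate A w)))
      \<le> 2 * e * real (card (cube c m))"
    by linarith
qed

lemma cube_almost_periodic_Int_translate:
  assumes "almost_periodic_pattern \<Gamma>"
  shows "cube_almost_periodic (\<Gamma> \<inter> translate \<Gamma> w)"
  unfolding cube_almost_periodic_def
proof (intro allI impI)
  fix e :: real assume "e > 0"
  then have "e/2 > 0" by simp
  then obtain M N where N: "rel_dense N" "\<forall>v\<in>N. almost_period \<Gamma> (e/2) M v"
    by (rule almost_periodic_pattern_almost_periods[OF assms])
  obtain L where "cube_dense L N"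
    using rel_dense_imp_cube_dense[OF N(1)] .
  moreover have "almost_period (\<Gamma> \<inter> translate \<Gamma> w) e M v" if "v \<in> N" for v
    using almost_period_Int_translate[of \<Gamma> "e/2" M v w] N(2) that by simp
  ultimately show "\<exists>M L N. cube_dense L N \<and> (\<forall>v\<in>N. almost_period (\<Gamma> \<inter> translate \<Gamma> w) e M v)"
    by blast
qed

lemma almost_period_card_Int_cube:
  assumes "almost_period A e M v" "M \<le> m"
  shows "\<bar>real (card (A \<inter> cube v m)) - real (card (A \<inter> cube 0 m))\<bar> \<le> e * real (card (cube v m))"
proof -
  have "card (translate A v \<inter> cube v m) = card (A \<inter> cube 0 m)"
    using card_cube_Int_translate[of v m A v] by (simp add: Int_commute)
  then have "\<bar>real (card (A \<inter> cube v m)) - real (card (A \<inter> cube 0 m))\<bar>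
      \<le> real (card (cube v m \<inter> sym_diff (translate A v) A))"
    using card_Int_diff_le_card_sym_diff[of "cube v m" A "translate A v"] by (simp add: Un_commute)
  also have "\<dots> \<le> e * real (card (cube v m))"
    using assms unfolding almost_period_def by blast
  finally show ?thesis .
qed

lemma card_cube_add_le_eventually:
  assumes "e > 0"
  obtains M where "\<forall>m\<ge>M. real (card (cube (c::int^'n) (m + d))) \<le> (1 + e) * real (card (cube c m))"
proof -
  have "(\<lambda>m::nat. real (2*(m+d)+1) / real (2*m+1)) \<longlonglongrightarrow> 1"
    by real_asymp
  then have "(\<lambda>m. (real (2*(m+d)+1) / real (2*m+1)) ^ CARD('n)) \<longlonglongrightarrow> 1"
    using tendsto_power by fastforce
  then have "eventually (\<lambda>m. (real (2*(m+d)+1) / real (2*m+1)) ^ CARD('n) < 1 + e) sequentially"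
    by (rule order_tendstoD) (use assms in simp)
  then obtain M where "\<forall>m\<ge>M. (real (2*(m+d)+1) / real (2*m+1)) ^ CARD('n) < 1 + e"
    unfolding eventually_sequentially by blast
  then have "\<forall>m\<ge>M. real (card (cube c (m + d))) \<le> (1 + e) * real (card (cube c m))"
    by (simp add: power_divide divide_less_eq less_imp_le)
  then show thesis by (rule that)
qed

lemma card_Int_cube_near_almost_period:
  fixes A :: "(int^'n) set"
  assumes "almost_period A e M v" "c \<in> cube v L" "M + L \<le> m"
    and "real (card (cube (0::int^'n) (m + L))) \<le> (1 + e) * real (card (cube (0::int^'n) (m - L)))"
    and "0 < e" "e \<le> 1"
  shows "\<bar>real (card (A \<inter> cube c m)) - real (card (A \<inter> cube 0 m))\<bar> \<le> 3 * e * real (card (cube c m))"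
proof -
  let ?n = "\<lambda>c r. real (card (A \<inter> cube c r))"
  let ?V = "\<lambda>r. real (card (cube (0::int^'n) r))"
  (* cube c m lies between the cubes of radii a and b around v, which are compared with the
     cubes around 0 through the almost period v. *)
  define a where "a = m - L"
  define b where "b = m + L"
  have ab: "M \<le> a" "M \<le> b" "a \<le> m" "m \<le> b"
    using assms(3) by (auto simp: a_def b_def)
  have up: "?n c m \<le> ?n v b"
    unfolding b_def using cube_subset_cube_add[OF assms(2), of m] by (intro of_nat_mono card_mono) auto
  have lo: "?n v a \<le> ?n c m"
    unfolding a_def using cube_diff_subset_cube[OF assms(2), of m] assms(3) by (intro of_nat_mono card_mono) auto
  have grow_b: "?n 0 b \<le> ?n 0 m + ?V b - ?V m"
    using ab by (intro card_Int_le_card_Int_add_diff cube_mono) simp_all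
  have grow_a: "?n 0 m \<le> ?n 0 a + ?V m - ?V a"
    using ab by (intro card_Int_le_card_Int_add_diff cube_mono) simp_all
  have per_b: "\<bar>?n v b - ?n 0 b\<bar> \<le> e * ?V b" and per_a: "\<bar>?n v a - ?n 0 a\<bar> \<le> e * ?V a"
    using almost_period_card_Int_cube[OF assms(1)] ab by simp_all
  have mono: "?V a \<le> ?V m" "?V m \<le> ?V b"
    using ab by (simp_all add: power_mono)
  have ratio: "?V b \<le> ?V a + e * ?V a"
    using assms(4) unfolding a_def b_def by (simp add: algebra_simps)
  have "e * ?V b \<le> e * ((1 + e) * ?V a)"
    using assms(4,5) unfolding a_def b_def by (intro mult_left_mono) simp_all
  also have "\<dots> \<le> e * (2 * ?V m)"
    using mono(1) assms(5,6) by (intro mult_left_mono mult_mono) auto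
  finally have per_b': "e * ?V b \<le> 2 * (e * ?V m)"
    by simp
  have per_a': "e * ?V a \<le> e * ?V m"
    using mono(1) assms(5) by (simp add: mult_left_mono)
  from up lo grow_a grow_b per_a per_b ratio mono per_a' per_b'
  have "\<bar>?n c m - ?n 0 m\<bar> \<le> 3 * (e * ?V m)"
    unfolding abs_le_iff by (intro conjI; linarith)
  then show ?thesis
    by simp
qed

lemma cube_almost_periodic_uniform:
  fixes A :: "(int^'n) set"
  assumes "cube_almost_periodic A" "e > 0"
  obtains M where "\<forall>m\<ge>M. \<forall>c. \<bar>real (card (A \<inter> cube c m)) - real (card (A \<inter> cube 0 m))\<bar>
      \<le> e * real (card (cube c m))"
proof -
  define e' where "e' = min 1 (e/3)"
  have e': "0 < e'" "e' \<le> 1" "3 * e' \<le> e"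
    using assms(2) by (auto simp: e'_def)
  obtain M L N where N: "cube_dense L N" "\<forall>v\<in>N. almost_period A e' M v"
    using assms(1) e'(1) unfolding cube_almost_periodic_def by blast
  obtain M' where M': "\<forall>m\<ge>M'. real (card (cube (0::int^'n) (m + 2*L))) \<le> (1 + e') * real (card (cube (0::int^'n) m))"
    using card_cube_add_le_eventually[OF e'(1)] by blast
  have "\<bar>real (card (A \<inter> cube c m)) - real (card (A \<inter> cube 0 m))\<bar> \<le> e * real (card (cube c m))"
    if "M + M' + L \<le> m" for m c
  proof -
    obtain v where v: "v \<in> N" "c \<in> cube v L"
      using N(1) unfolding cube_dense_def by (auto simp: mem_cube_commute[of c])
    have "m - L + 2*L = m + L" "M' \<le> m - L"
      using that by simp_all
    then have "real (card (cube (0::int^'n) (m + L))) \<le> (1 + e') * real (card (cube (0::int^'n) (m - L)))"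
      using M' by metis
    then have "\<bar>real (card (A \<inter> cube c m)) - real (card (A \<inter> cube 0 m))\<bar> \<le> 3 * e' * real (card (cube c m))"
      using N(2) v that e' by (intro card_Int_cube_near_almost_period[of A e' M v c L]) auto
    also have "\<dots> \<le> e * real (card (cube c m))"
      using e'(3) by (intro mult_right_mono) simp_all
    finally show ?thesis .
  qed
  then show thesis
    by (intro that) blast
qed

section \<open>Tiling a cube by translates of a smaller one\<close>

lemma cube_eq_UN_tiles:
  "cube (0::int^'n) (m + k*(2*m+1)) = (\<Union>j\<in>cube 0 k. cube ((2 * int m + 1) *s j) m)"
proof (intro set_eqI iffI)
  fix x :: "int^'n" assume "x \<in> cube 0 (m + k*(2*m+1))"
  then have x: "\<bar>x$i\<bar> \<le> int m + int k * (2 * int m + 1)" for i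
    by (simp add: cube_def algebra_simps)
  define j :: "int^'n" where "j = (\<chi> i. (x$i + int m) div (2 * int m + 1))"
  have "j \<in> cube 0 k"
    using abs_le_odd_mult_div(1)[OF x] by (simp add: cube_def j_def)
  moreover have "x \<in> cube ((2 * int m + 1) *s j) m"
    using abs_le_odd_mult_div(2)[OF x]
    unfolding cube_def mem_Collect_eq vector_smult_component j_def vec_lambda_beta by blast
  ultimately show "x \<in> (\<Union>j\<in>cube 0 k. cube ((2 * int m + 1) *s j) m)"
    by blast
next
  fix x :: "int^'n" assume "x \<in> (\<Union>j\<in>cube 0 k. cube ((2 * int m + 1) *s j) m)"
  then obtain j where "j \<in> cube 0 k" "x \<in> cube ((2 * int m + 1) *s j) m"
    by blast
  then have "\<bar>x$i\<bar> \<le> int m + int k * (2 * int m + 1)" for i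
    unfolding cube_def mem_Collect_eq vector_smult_component zero_index
    by (intro abs_le_of_odd_mult_near[of "j$i"]) auto
  then show "x \<in> cube 0 (m + k*(2*m+1))"
    by (simp add: cube_def algebra_simps)
qed

lemma tiles_disjoint:
  assumes "j \<noteq> j'"
  shows "cube ((2 * int m + 1) *s j) m \<inter> cube ((2 * int m + 1) *s j') m = {}"
proof (rule ccontr)
  assume "cube ((2 * int m + 1) *s j) m \<inter> cube ((2 * int m + 1) *s j') m \<noteq> {}"
  then obtain x where "x \<in> cube ((2 * int m + 1) *s j) m" "x \<in> cube ((2 * int m + 1) *s j') m"
    by blast
  then have "j$i = j'$i" for i
    unfolding cube_def mem_Collect_eq vector_smult_component
    by (intro odd_mult_near_unique[of "x$i" m]) blast+
  with assms show False
    by (simp add: vec_eq_iff)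
qed

lemma card_Int_cube_tiling:
  "card (A \<inter> cube (0::int^'n) (m + k*(2*m+1)))
     = (\<Sum>j\<in>cube (0::int^'n) k. card (A \<inter> cube ((2 * int m + 1) *s j) m))"
proof -
  have "A \<inter> cube (0::int^'n) (m + k*(2*m+1)) = (\<Union>j\<in>cube 0 k. A \<inter> cube ((2 * int m + 1) *s j) m)"
    unfolding cube_eq_UN_tiles by blast
  also have "card \<dots> = (\<Sum>j\<in>cube (0::int^'n) k. card (A \<inter> cube ((2 * int m + 1) *s j) m))"
    using tiles_disjoint by (intro card_UN_disjoint) auto
  finally show ?thesis .
qed

lemma card_cube_tiling:
  "card (cube (0::int^'n) (m + k*(2*m+1))) = card (cube (0::int^'n) k) * card (cube (0::int^'n) m)"
proof -
  have "2*(m + k*(2*m+1)) + 1 = (2*k+1)*(2*m+1)"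
    by (simp add: algebra_simps)
  then show ?thesis
    unfolding card_cube by (simp only: power_mult_distrib)
qed

definition cube_density :: "(int^'n) set \<Rightarrow> nat \<Rightarrow> real" where
  "cube_density A m = real (card (A \<inter> cube 0 m)) / real (card (cube (0::int^'n) m))"

lemma cube_density_tiling:
  fixes A :: "(int^'n) set"
  shows "cube_density A (m + k*(2*m+1))
    = (\<Sum>j\<in>cube (0::int^'n) k. real (card (A \<inter> cube ((2 * int m + 1) *s j) m)))
        / (real (card (cube (0::int^'n) k)) * real (card (cube (0::int^'n) m)))"
  unfolding cube_density_def card_cube_tiling card_Int_cube_tiling by simp

section \<open>Existence and positivity of the densities\<close>

lemma cube_density_tiling_close:
  fixes A :: "(int^'n) set"
  assumes "\<forall>c. \<bar>real (card (A \<inter> cube c m)) - real (card (A \<inter> cube 0 m))\<bar> \<le> e * real (card (cube c m))"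
  shows "\<bar>cube_density A (m + k*(2*m+1)) - cube_density A m\<bar> \<le> e"
proof -
  define K where "K = real (card (cube (0::int^'n) k))"
  define V where "V = real (card (cube (0::int^'n) m))"
  let ?t = "\<lambda>j. real (card (A \<inter> cube ((2 * int m + 1) *s j) m))"
  have pos: "K > 0" "V > 0"
    by (simp_all add: K_def V_def)
  have "cube_density A (m + k*(2*m+1)) = (\<Sum>j\<in>cube (0::int^'n) k. ?t j) / (K * V)"
    unfolding K_def V_def by (rule cube_density_tiling)
  moreover have "cube_density A m = real (card (A \<inter> cube 0 m)) / V"
    unfolding V_def cube_density_def ..
  moreover have "(\<Sum>j\<in>cube (0::int^'n) k. ?t j - real (card (A \<inter> cube 0 m)))
      = (\<Sum>j\<in>cube (0::int^'n) k. ?t j) - K * real (card (A \<inter> cube 0 m))"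
    unfolding K_def by (simp add: sum_subtractf)
  ultimately have "cube_density A (m + k*(2*m+1)) - cube_density A m
      = (\<Sum>j\<in>cube (0::int^'n) k. ?t j - real (card (A \<inter> cube 0 m))) / (K * V)"
    using pos by (simp add: field_simps)
  also have "\<bar>\<dots>\<bar> = \<bar>\<Sum>j\<in>cube (0::int^'n) k. ?t j - real (card (A \<inter> cube 0 m))\<bar> / (K * V)"
    using pos by (simp add: abs_divide)
  also have "\<dots> \<le> (\<Sum>j\<in>cube (0::int^'n) k. e * V) / (K * V)"
  proof (intro divide_right_mono order_trans[OF sum_abs] sum_mono)
    show "\<bar>?t j - real (card (A \<inter> cube 0 m))\<bar> \<le> e * V" for j
      using assms unfolding V_def by simp
  qed (use pos in simp)
  also have "\<dots> = e"
    using pos by (simp add: K_def)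
  finally show ?thesis .
qed

lemma cube_density_diff_le:
  fixes A :: "(int^'n) set"
  assumes "m \<le> m'"
  shows "\<bar>cube_density A m' - cube_density A m\<bar>
    \<le> (real (card (cube (0::int^'n) m')) - real (card (cube (0::int^'n) m))) / real (card (cube (0::int^'n) m'))"
  unfolding cube_density_def
proof (rule abs_divide_diff_le)
  show "real (card (A \<inter> cube 0 m)) \<le> real (card (cube (0::int^'n) m))"
    by (intro of_nat_mono card_mono) auto
  show "real (card (cube (0::int^'n) m)) \<le> real (card (cube (0::int^'n) m'))"
    using assms by (simp add: power_mono)
  show "real (card (A \<inter> cube 0 m)) \<le> real (card (A \<inter> cube 0 m'))"
    using cube_mono[OF assms] by (intro of_nat_mono card_mono) auto
  show "real (card (A \<inter> cube 0 m')) \<le> real (card (A \<inter> cube 0 m)) + (real (card (cube (0::int^'n) m')) - real (card (cube (0::int^'n) m)))"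
    using card_Int_le_card_Int_add_diff[of "cube (0::int^'n) m'" "cube 0 m" A] assms
    by (simp add: cube_mono)
qed simp_all

lemma cube_density_near_tiling_scale:
  fixes A :: "(int^'n) set"
  assumes tiles: "\<forall>c. \<bar>real (card (A \<inter> cube c m0)) - real (card (A \<inter> cube 0 m0))\<bar>
      \<le> e * real (card (cube c m0))"
    and ratio: "\<forall>m\<ge>M. real (card (cube (0::int^'n) (m + (2*m0+1)))) \<le> (1 + e) * real (card (cube (0::int^'n) m))"
    and "0 \<le> e" "M + m0 + (2*m0+1) \<le> m"
  shows "\<bar>cube_density A m - cube_density A m0\<bar> \<le> 2 * e"
proof -
  let ?V = "\<lambda>r. real (card (cube (0::int^'n) r))"
  define s where "s = 2*m0 + 1"
  (* the largest radius \<le> m at which cube 0 P is tiled by translates of cube 0 m0 *)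
  define P where "P = m0 + (m - m0) div s * s"
  have "(m - m0) div s * s + (m - m0) mod s = m - m0"
    by (rule div_mult_mod_eq)
  moreover have "(m - m0) mod s < s"
    by (simp add: s_def)
  ultimately have P: "P \<le> m" "m \<le> P + s" "M \<le> P"
    using assms(4) unfolding P_def s_def by linarith+
  have "\<bar>cube_density A P - cube_density A m0\<bar> \<le> e"
    unfolding P_def s_def by (rule cube_density_tiling_close[OF tiles])
  moreover have "\<bar>cube_density A m - cube_density A P\<bar> \<le> e"
  proof -
    have "?V m \<le> ?V (P + s)"
      using P(2) by (simp add: power_mono)
    also have "\<dots> \<le> (1 + e) * ?V P"
      using ratio P(3) unfolding s_def by blast
    finally have "?V m - ?V P \<le> e * ?V P"
      by (simp add: algebra_simps)
    also have "\<dots> \<le> e * ?V m"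
      using P(1) assms(3) by (intro mult_left_mono) (simp_all add: power_mono)
    finally have "(?V m - ?V P) / ?V m \<le> e"
      by (simp add: divide_le_eq)
    then show ?thesis
      using cube_density_diff_le[OF P(1), of A] by linarith
  qed
  ultimately show ?thesis
    by linarith
qed

lemma convergent_cube_density:
  fixes A :: "(int^'n) set"
  assumes "cube_almost_periodic A"
  shows "convergent (cube_density A)"
proof -
  have "Cauchy (cube_density A)"
  proof (rule CauchyI)
    fix e :: real assume "0 < e"
    then have e: "e/6 > 0" by simp
    obtain m0 where "\<forall>m\<ge>m0. \<forall>c. \<bar>real (card (A \<inter> cube c m)) - real (card (A \<inter> cube 0 m))\<bar>
        \<le> e/6 * real (card (cube c m))"
      using cube_almost_periodic_uniform[OF assms e] by blast
    then have tiles: "\<forall>c. \<bar>real (card (A \<inter> cube c m0)) - real (card (A \<inter> cube 0 m0))\<bar>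
        \<le> e/6 * real (card (cube c m0))"
      by blast
    obtain M where ratio: "\<forall>m\<ge>M. real (card (cube (0::int^'n) (m + (2*m0+1))))
        \<le> (1 + e/6) * real (card (cube (0::int^'n) m))"
      using card_cube_add_le_eventually[OF e] by blast
    have "\<bar>cube_density A m - cube_density A n\<bar> < e"
      if "M + m0 + (2*m0+1) \<le> m" "M + m0 + (2*m0+1) \<le> n" for m n
    proof -
      have "\<bar>cube_density A m - cube_density A m0\<bar> \<le> 2 * (e/6)"
        and "\<bar>cube_density A n - cube_density A m0\<bar> \<le> 2 * (e/6)"
        using e that by (intro cube_density_near_tiling_scale[OF tiles ratio]; simp)+
      with \<open>0 < e\<close> show ?thesis
        unfolding abs_le_iff abs_less_iff by (intro conjI; linarith)
    qed
    then show "\<exists>M. \<forall>m\<ge>M. \<forall>n\<ge>M. norm (cube_density A m - cube_density A n) < e"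
      by auto
  qed
  then show ?thesis
    by (simp add: Cauchy_convergent_iff)
qed

lemma density_eq_lim_cube_density:
  fixes A :: "(int^'n) set"
  assumes "cube_density A \<longlonglongrightarrow> l"
  shows "density A = l"
proof -
  have "filterlim (\<lambda>R::real. nat (\<lceil>R\<rceil> - 1)) sequentially at_top"
    unfolding filterlim_at_top eventually_at_top_linorder
  proof
    fix Z :: nat
    show "\<exists>N. \<forall>R::real\<ge>N. Z \<le> nat (\<lceil>R\<rceil> - 1)"
    proof (intro exI[of _ "real Z + 1"] allI impI)
      fix R :: real assume "real Z + 1 \<le> R"
      then show "Z \<le> nat (\<lceil>R\<rceil> - 1)"
        using le_of_int_ceiling[of R] by linarith
    qed
  qed
  then have "((\<lambda>R::real. cube_density A (nat (\<lceil>R\<rceil> - 1))) \<longlongrightarrow> l) at_top"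
    by (rule filterlim_compose[OF assms])
  moreover have "eventually (\<lambda>R::real. cube_density A (nat (\<lceil>R\<rceil> - 1)) =
      real (card (A \<inter> lat_ball 0 R)) / real (card (lat_ball (0::real^'n) R))) at_top"
    using eventually_gt_at_top[of 0] by eventually_elim (simp add: lat_ball_0_eq_cube cube_density_def)
  ultimately have "((\<lambda>R. real (card (A \<inter> lat_ball 0 R)) / real (card (lat_ball (0::real^'n) R))) \<longlongrightarrow> l) at_top"
    by (rule Lim_transform_eventually)
  then show ?thesis
    unfolding density_def by (rule tendsto_Lim[rotated]) simp
qed

lemma cube_density_tendsto_density:
  fixes A :: "(int^'n) set"
  assumes "cube_almost_periodic A"
  shows "cube_density A \<longlonglongrightarrow> density A"
  using convergent_cube_density[OF assms] density_eq_lim_cube_density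
  unfolding convergent_def by blast

lemma density_pos:
  fixes \<Gamma> :: "(int^'n) set"
  assumes "almost_periodic_pattern \<Gamma>"
  shows "density \<Gamma> > 0"
proof -
  have "\<Gamma> \<inter> translate \<Gamma> 0 = \<Gamma>"
    by (simp add: translate_def)
  then have lim: "cube_density \<Gamma> \<longlonglongrightarrow> density \<Gamma>"
    using cube_density_tendsto_density[OF cube_almost_periodic_Int_translate[OF assms, of 0]] by simp
  obtain L where L: "cube_dense L \<Gamma>"
    using assms rel_dense_imp_cube_dense unfolding almost_periodic_pattern_def delone_def by blast
  define V where "V = real (card (cube (0::int^'n) L))"
  have V: "V > 0"
    by (simp add: V_def)
  have "1 / V \<le> cube_density \<Gamma> (L + k*(2*L+1))" for k
  proof -
    define K where "K = real (card (cube (0::int^'n) k))"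
    have one: "1 \<le> real (card (\<Gamma> \<inter> cube c L))" for c
      using L unfolding cube_dense_def by (simp add: Suc_le_eq card_gt_0_iff)
    have "K = (\<Sum>j\<in>cube (0::int^'n) k. 1)"
      by (simp add: K_def)
    also have "\<dots> \<le> (\<Sum>j\<in>cube (0::int^'n) k. real (card (\<Gamma> \<inter> cube ((2 * int L + 1) *s j) L)))"
      by (intro sum_mono one)
    finally have "K \<le> \<dots>" .
    then have "K / (K * V) \<le> cube_density \<Gamma> (L + k*(2*L+1))"
      unfolding cube_density_tiling K_def V_def by (intro divide_right_mono) simp_all
    moreover have "K > 0"
      by (simp add: K_def)
    ultimately show ?thesis
      by simp
  qed
  moreover have "strict_mono (\<lambda>k. L + k*(2*L+1))"
    by (intro strict_monoI add_strict_left_mono mult_strict_right_mono) simp_all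
  then have "(\<lambda>k. cube_density \<Gamma> (L + k*(2*L+1))) \<longlonglongrightarrow> density \<Gamma>"
    using LIMSEQ_subseq_LIMSEQ[OF lim] by (simp add: o_def)
  ultimately have "1 / V \<le> density \<Gamma>"
    by (intro tendsto_lowerbound[of "\<lambda>k. cube_density \<Gamma> (L + k*(2*L+1))"]) auto
  with V show ?thesis
    by (smt (verit) divide_pos_pos)
qed

lemma sym_diff_Int_translate_subset:
  "sym_diff (A \<inter> translate A (-u)) (A \<inter> translate A (-(u + v)))
     \<subseteq> translate (sym_diff (translate A v) A) (-(u + v))"
  by (auto simp: mem_translate algebra_simps)

lemma density_Int_translate_diff_le:
  fixes \<Gamma> :: "(int^'n) set"
  assumes "almost_periodic_pattern \<Gamma>" "almost_period \<Gamma> \<delta> M v"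
  shows "\<bar>density (\<Gamma> \<inter> translate \<Gamma> (-u)) - density (\<Gamma> \<inter> translate \<Gamma> (-(u + v)))\<bar> \<le> \<delta>"
proof -
  define A where "A = \<Gamma> \<inter> translate \<Gamma> (-u)"
  define B where "B = \<Gamma> \<inter> translate \<Gamma> (-(u + v))"
  have "(\<lambda>m. \<bar>cube_density A m - cube_density B m\<bar>) \<longlonglongrightarrow> \<bar>density A - density B\<bar>"
    unfolding A_def B_def
    by (intro tendsto_intros cube_density_tendsto_density cube_almost_periodic_Int_translate assms(1))
  moreover have "\<bar>cube_density A m - cube_density B m\<bar> \<le> \<delta>" if "M \<le> m" for m
  proof -
    have "\<bar>real (card (A \<inter> cube 0 m)) - real (card (B \<inter> cube 0 m))\<bar>
        \<le> real (card (cube 0 m \<inter> sym_diff A B))"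
      by (rule card_Int_diff_le_card_sym_diff) simp
    also have "\<dots> \<le> real (card (cube 0 m \<inter> translate (sym_diff (translate \<Gamma> v) \<Gamma>) (-(u + v))))"
      using sym_diff_Int_translate_subset[of \<Gamma> u v] unfolding A_def B_def
      by (intro of_nat_mono card_mono) auto
    also have "\<dots> = real (card (cube (u + v) m \<inter> sym_diff (translate \<Gamma> v) \<Gamma>))"
      by (simp add: card_cube_Int_translate add.commute)
    also have "\<dots> \<le> \<delta> * real (card (cube (0::int^'n) m))"
      using assms(2) \<open>M \<le> m\<close> unfolding almost_period_def by (metis card_cube)
    finally show ?thesis
      unfolding cube_density_def diff_divide_distrib[symmetric] abs_divide
      by (simp add: divide_le_eq)
  qed
  then have "eventually (\<lambda>m. \<bar>cube_density A m - cube_density B m\<bar> \<le> \<delta>) sequentially"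
    unfolding eventually_sequentially by blast
  ultimately have "\<bar>density A - density B\<bar> \<le> \<delta>"
    by (rule tendsto_upperbound) simp
  then show ?thesis
    unfolding A_def B_def .
qed

theorem lemma2p7:
  fixes \<Gamma> :: "(int^'n) set"
  assumes "almost_periodic_pattern \<Gamma>"
  shows "\<forall>\<epsilon>>0. rel_dense {v::int^'n. \<exists>c<\<epsilon>. \<forall>u. \<bar>rho \<Gamma> u - rho \<Gamma> (u + v)\<bar> \<le> c}"
proof (intro allI impI)
  fix \<epsilon> :: real assume "\<epsilon> > 0"
  define d where "d = density \<Gamma>"
  have "d > 0"
    unfolding d_def using density_pos[OF assms] .
  with \<open>\<epsilon> > 0\<close> have "\<epsilon> * d / 2 > 0"
    by simp
  then obtain M N where N: "rel_dense N" "\<forall>v\<in>N. almost_period \<Gamma> (\<epsilon> * d / 2) M v"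
    by (rule almost_periodic_pattern_almost_periods[OF assms])
  have rho_close: "\<bar>rho \<Gamma> u - rho \<Gamma> (u + v)\<bar> \<le> \<epsilon> / 2" if "v \<in> N" for u v
  proof -
    have "\<bar>density (\<Gamma> \<inter> translate \<Gamma> (-u)) - density (\<Gamma> \<inter> translate \<Gamma> (-(u + v)))\<bar> \<le> \<epsilon> * d / 2"
      using N(2) that by (intro density_Int_translate_diff_le[OF assms]) blast
    with \<open>d > 0\<close> show ?thesis
      unfolding rho_def d_def[symmetric] diff_divide_distrib[symmetric] abs_divide
      by (simp add: divide_le_eq)
  qed
  have "N \<subseteq> {v. \<exists>c<\<epsilon>. \<forall>u. \<bar>rho \<Gamma> u - rho \<Gamma> (u + v)\<bar> \<le> c}"
  proof
    fix v assume "v \<in> N"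
    with \<open>\<epsilon> > 0\<close> rho_close show "v \<in> {v. \<exists>c<\<epsilon>. \<forall>u. \<bar>rho \<Gamma> u - rho \<Gamma> (u + v)\<bar> \<le> c}"
      by (intro CollectI exI[of _ "\<epsilon> / 2"]) simp
  qed
  with N(1) show "rel_dense {v::int^'n. \<exists>c<\<epsilon>. \<forall>u. \<bar>rho \<Gamma> u - rho \<Gamma> (u + v)\<bar> \<le> c}"
    by (rule rel_dense_mono)
qed

end
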